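(* The set $G^*\operatorname{cone}\big(\mathbb{R}^m_- -(G\bar u-b)\big)^\circ$ is a weakly-$*$ closed subset of $L^\infty(\Lambda)^*$.
   Context: Let $\Lambda\subset\mathbb{R}^d$ be bounded and Lebesgue measurable, $f:L^2(\Lambda)\to\mathbb{R}$ continuously Fréchet differentiable, $G:L^2(\Lambda)\to\mathbb{R}^m$ linear and bounded, $b\in\mathbb{R}^m$, $u_a,u_b\in L^\infty(\Lambda)$ with $u_a+\delta\le u_b$ a.e. for some $\delta>0$. Consider the problem: minimize $f(u)$ subject to $u_a\le u\le u_b$ a.e. in $\Lambda$ and $Gu\le b$. Assume there is $\hat u\in L^\infty(\Lambda)$ with $G\hat u\le b$ and $u_a+\rho\le\hat u\le u_b-\rho$ a.e. for some $\rho>0$. Let $\bar u\in L^\infty(\Lambda)$ be a locally optimal solution of this problem. $G$ is also regarded as a map on $L^\infty(\Lambda)\hookrightarrow L^2(\Lambda)$, with adjoint $G^*:\mathbb{R}^m\to L^\infty(\Lambda)^*$. $\mathbb{R}^m_-:=\{v\in\mathbb{R}^m:v\le0\}$, $\operatorname{cone}$ denotes the conic hull, and $K^\circ:=\{w\in\mathbb{R}^m: w^\top v\le 0\ \forall v\in K\}$ the polar cone. *)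

theory Defs
  imports "HOL-Analysis.Analysis"
begin

text \<open>Functions on the domain are represented by total functions; all notions
below only look at their restriction to the domain, modulo null sets of
Lebesgue measure restricted to the domain.\<close>

definition Linf :: "('d::euclidean_space) set \<Rightarrow> ('d \<Rightarrow> real) set" where
  "Linf Lam = {u. u \<in> borel_measurable (lebesgue_on Lam) \<and>
                 (\<exists>C. AE x in lebesgue_on Lam. \<bar>u x\<bar> \<le> C)}"

definition L2 :: "('d::euclidean_space) set \<Rightarrow> ('d \<Rightarrow> real) set" where
  "L2 Lam = {u. u \<in> borel_measurable (lebesgue_on Lam) \<and>
               integrable (lebesgue_on Lam) (\<lambda>x. (u x)\<^sup>2)}"

definition l2norm :: "('d::euclidean_space) set \<Rightarrow> ('d \<Rightarrow> real) \<Rightarrow> real" where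
  "l2norm Lam u = sqrt (integral\<^sup>L (lebesgue_on Lam) (\<lambda>x. (u x)\<^sup>2))"

definition bdd_lin_L2 :: "('d::euclidean_space) set \<Rightarrow> (('d \<Rightarrow> real) \<Rightarrow> real) \<Rightarrow> bool" where
  "bdd_lin_L2 Lam A \<longleftrightarrow>
     (\<forall>u\<in>L2 Lam. \<forall>v\<in>L2 Lam. \<forall>a c. A (\<lambda>x. a * u x + c * v x) = a * A u + c * A v) \<and>
     (\<exists>C. \<forall>u\<in>L2 Lam. \<bar>A u\<bar> \<le> C * l2norm Lam u)"

definition frechet_L2 ::
  "('d::euclidean_space) set \<Rightarrow> (('d \<Rightarrow> real) \<Rightarrow> real) \<Rightarrow> ('d \<Rightarrow> real) \<Rightarrow> (('d \<Rightarrow> real) \<Rightarrow> real) \<Rightarrow> bool" where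
  "frechet_L2 Lam f u A \<longleftrightarrow> bdd_lin_L2 Lam A \<and>
     (\<forall>e>0. \<exists>r>0. \<forall>h\<in>L2 Lam. l2norm Lam h < r \<longrightarrow>
        \<bar>f (\<lambda>x. u x + h x) - f u - A h\<bar> \<le> e * l2norm Lam h)"

definition C1_L2 :: "('d::euclidean_space) set \<Rightarrow> (('d \<Rightarrow> real) \<Rightarrow> real) \<Rightarrow> bool" where
  "C1_L2 Lam f \<longleftrightarrow> (\<exists>Df. (\<forall>u\<in>L2 Lam. frechet_L2 Lam f u (Df u)) \<and>
     (\<forall>u\<in>L2 Lam. \<forall>e>0. \<exists>r>0. \<forall>v\<in>L2 Lam.
        l2norm Lam (\<lambda>x. v x - u x) < r \<longrightarrow>
        (\<forall>h\<in>L2 Lam. \<bar>Df v h - Df u h\<bar> \<le> e * l2norm Lam h)))"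

text \<open>The dual space of L-infinity: bounded linear functionals, represented as
extensional functions on the set of L-infinity representatives.\<close>
definition Linf_dual :: "('d::euclidean_space) set \<Rightarrow> (('d \<Rightarrow> real) \<Rightarrow> real) set" where
  "Linf_dual Lam = {phi. phi \<in> extensional (Linf Lam) \<and>
     (\<forall>u\<in>Linf Lam. \<forall>v\<in>Linf Lam. \<forall>a c. phi (\<lambda>x. a * u x + c * v x) = a * phi u + c * phi v) \<and>
     (\<exists>C\<ge>0. \<forall>u\<in>Linf Lam. \<forall>c. (AE x in lebesgue_on Lam. \<bar>u x\<bar> \<le> c) \<longrightarrow> \<bar>phi u\<bar> \<le> C * c)}"

text \<open>Weak-* topology: initial topology of the evaluations at elements of L-infinity.\<close>
definition weak_star :: "('d::euclidean_space) set \<Rightarrow> (('d \<Rightarrow> real) \<Rightarrow> real) topology" where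
  "weak_star Lam = subtopology (product_topology (\<lambda>_. euclideanreal) (Linf Lam)) (Linf_dual Lam)"

definition adjG :: "('d::euclidean_space) set \<Rightarrow> (('d \<Rightarrow> real) \<Rightarrow> real^'m) \<Rightarrow> real^'m \<Rightarrow> (('d \<Rightarrow> real) \<Rightarrow> real)" where
  "adjG Lam G w = restrict (\<lambda>u. w \<bullet> G u) (Linf Lam)"

definition nonpos_orthant :: "(real^'m) set" where
  "nonpos_orthant = {v. \<forall>i. v $ i \<le> 0}"

definition polar_cone :: "(real^'m) set \<Rightarrow> (real^'m) set" where
  "polar_cone K = {w. \<forall>v\<in>K. w \<bullet> v \<le> 0}"

definition feasible ::
  "('d::euclidean_space) set \<Rightarrow> (('d \<Rightarrow> real) \<Rightarrow> real^'m) \<Rightarrow> real^'m \<Rightarrow> ('d \<Rightarrow> real) \<Rightarrow> ('d \<Rightarrow> real) \<Rightarrow> ('d \<Rightarrow> real) \<Rightarrow> bool" where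
  "feasible Lam G b ua ub u \<longleftrightarrow> u \<in> L2 Lam \<and>
     (AE x in lebesgue_on Lam. ua x \<le> u x \<and> u x \<le> ub x) \<and> (\<forall>i. G u $ i \<le> b $ i)"

end

theory Submission
  imports Defs
begin

text \<open>The polar cone of the cone generated by \<open>\<real>\<^sup>m\<^sub>- - (G ubar - b)\<close> is the nonnegative
orthant of the active constraints, a finitely generated cone. Its image under \<open>G\<^sup>*\<close> lies
in the finite-dimensional space \<open>G\<^sup>*(\<real>\<^sup>m)\<close>: fixing a basis \<open>G u\<^sub>1, \<dots>, G u\<^sub>k\<close> of
\<open>G(L\<^sup>\<infinity>)\<close>, a functional \<open>\<phi>\<close> belongs to the image iff it is determined by the numbers
\<open>\<phi>(u\<^sub>1), \<dots>, \<phi>(u\<^sub>k)\<close> through the coordinates of \<open>G u\<close>, and these numbers lie in a closed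
polyhedral cone. Both conditions involve only evaluations of \<open>\<phi>\<close>, hence are weak-* closed.\<close>

lemma Linf_imp_L2:
  assumes "Lam \<in> sets lebesgue" "bounded Lam" "u \<in> Linf Lam"
  shows "u \<in> L2 Lam"
proof -
  have "Lam \<in> lmeasurable" using assms bounded_set_imp_lmeasurable by blast
  then interpret finite_measure "lebesgue_on Lam" by (rule finite_measure_lebesgue_on)
  obtain C where C: "AE x in lebesgue_on Lam. \<bar>u x\<bar> \<le> C"
    and meas: "u \<in> borel_measurable (lebesgue_on Lam)"
    using assms(3) unfolding Linf_def by blast
  have "AE x in lebesgue_on Lam. norm ((u x)\<^sup>2) \<le> C\<^sup>2"
    using C by eventually_elim (simp, metis abs_ge_zero power2_abs power_mono)
  moreover have "(\<lambda>x. (u x)\<^sup>2) \<in> borel_measurable (lebesgue_on Lam)" using meas by measurable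
  ultimately have "integrable (lebesgue_on Lam) (\<lambda>x. (u x)\<^sup>2)"
    by (intro integrable_const_bound)
  then show ?thesis using meas unfolding L2_def by blast
qed

lemma Linf_lin_comb:
  assumes "u \<in> Linf Lam" "v \<in> Linf Lam"
  shows "(\<lambda>x. a * u x + c * v x) \<in> Linf Lam"
proof -
  obtain C where C: "AE x in lebesgue_on Lam. \<bar>u x\<bar> \<le> C"
    and meas_u: "u \<in> borel_measurable (lebesgue_on Lam)"
    using assms(1) unfolding Linf_def by blast
  obtain D where D: "AE x in lebesgue_on Lam. \<bar>v x\<bar> \<le> D"
    and meas_v: "v \<in> borel_measurable (lebesgue_on Lam)"
    using assms(2) unfolding Linf_def by blast
  have "AE x in lebesgue_on Lam. \<bar>a * u x + c * v x\<bar> \<le> \<bar>a\<bar> * C + \<bar>c\<bar> * D"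
    using C D
  proof eventually_elim
    case (elim x)
    have "\<bar>a * u x + c * v x\<bar> \<le> \<bar>a\<bar> * \<bar>u x\<bar> + \<bar>c\<bar> * \<bar>v x\<bar>"
      by (metis abs_mult abs_triangle_ineq)
    also have "\<dots> \<le> \<bar>a\<bar> * C + \<bar>c\<bar> * D"
      using elim by (intro add_mono mult_left_mono) auto
    finally show ?case .
  qed
  moreover have "(\<lambda>x. a * u x + c * v x) \<in> borel_measurable (lebesgue_on Lam)"
    using meas_u meas_v by measurable
  ultimately show ?thesis unfolding Linf_def by blast
qed

lemma l2norm_le_ess_bound:
  assumes "Lam \<in> sets lebesgue" "bounded Lam" "u \<in> Linf Lam"
    and bound: "AE x in lebesgue_on Lam. \<bar>u x\<bar> \<le> c"
  shows "l2norm Lam u \<le> c * sqrt (measure (lebesgue_on Lam) (space (lebesgue_on Lam)))"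
proof -
  have "Lam \<in> lmeasurable" using assms bounded_set_imp_lmeasurable by blast
  then interpret finite_measure "lebesgue_on Lam" by (rule finite_measure_lebesgue_on)
  let ?M = "measure (lebesgue_on Lam) (space (lebesgue_on Lam))"
  have int: "integrable (lebesgue_on Lam) (\<lambda>x. (u x)\<^sup>2)"
    using Linf_imp_L2[OF assms(1-3)] unfolding L2_def by blast
  have "integral\<^sup>L (lebesgue_on Lam) (\<lambda>x. (u x)\<^sup>2) \<le> integral\<^sup>L (lebesgue_on Lam) (\<lambda>x. c\<^sup>2)"
    using int
  proof (intro integral_mono_AE)
    show "AE x in lebesgue_on Lam. (u x)\<^sup>2 \<le> c\<^sup>2"
      using bound by eventually_elim (metis abs_ge_zero power2_abs power_mono)
  qed auto
  also have "\<dots> = c\<^sup>2 * ?M" by simp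
  finally have le: "integral\<^sup>L (lebesgue_on Lam) (\<lambda>x. (u x)\<^sup>2) \<le> c\<^sup>2 * ?M" .
  show ?thesis
  proof (cases "c < 0")
    case True
    \<comment> \<open>a negative essential bound is only possible on a null domain\<close>
    have "AE x in lebesgue_on Lam. False" using bound by (rule AE_mp) (use True in auto)
    then have "emeasure (lebesgue_on Lam) (space (lebesgue_on Lam)) = 0"
      using ae_filter_eq_bot_iff trivial_limit_def by metis
    then have M0: "?M = 0" by (simp add: measure_def)
    have "AE x in lebesgue_on Lam. (u x)\<^sup>2 = 0"
      using \<open>AE x in lebesgue_on Lam. False\<close> by (rule AE_mp) auto
    then have "integral\<^sup>L (lebesgue_on Lam) (\<lambda>x. (u x)\<^sup>2) = 0" by (simp add: integral_eq_zero_AE)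
    then show ?thesis using M0 by (simp add: l2norm_def)
  next
    case False
    have "l2norm Lam u \<le> sqrt (c\<^sup>2 * ?M)" unfolding l2norm_def using le by simp
    also have "\<dots> = c * sqrt ?M" using False by (simp add: real_sqrt_mult)
    finally show ?thesis .
  qed
qed

lemma adjG_in_Linf_dual:
  fixes G :: "(real^'d \<Rightarrow> real) \<Rightarrow> real^'m"
  assumes "Lam \<in> sets lebesgue" "bounded Lam"
    and G_lin: "\<forall>u\<in>L2 Lam. \<forall>v\<in>L2 Lam. \<forall>a c. G (\<lambda>x. a * u x + c * v x) = a *\<^sub>R G u + c *\<^sub>R G v"
    and G_bdd: "\<exists>C. \<forall>u\<in>L2 Lam. norm (G u) \<le> C * l2norm Lam u"
  shows "adjG Lam G w \<in> Linf_dual Lam"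
proof -
  obtain C where C: "\<forall>u\<in>L2 Lam. norm (G u) \<le> C * l2norm Lam u" using G_bdd by blast
  let ?M = "measure (lebesgue_on Lam) (space (lebesgue_on Lam))"
  define K where "K = norm w * max C 0 * sqrt ?M"
  have l2norm_nonneg: "l2norm Lam u \<ge> 0" for u unfolding l2norm_def by simp
  have bound: "\<bar>adjG Lam G w u\<bar> \<le> K * c"
    if u: "u \<in> Linf Lam" and c: "AE x in lebesgue_on Lam. \<bar>u x\<bar> \<le> c" for u c
  proof -
    have "\<bar>adjG Lam G w u\<bar> = \<bar>w \<bullet> G u\<bar>" using u by (simp add: adjG_def)
    also have "\<dots> \<le> norm w * norm (G u)" by (rule Cauchy_Schwarz_ineq2)
    also have "\<dots> \<le> norm w * (max C 0 * l2norm Lam u)"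
      using C Linf_imp_L2[OF assms(1,2) u] l2norm_nonneg[of u]
      by (intro mult_left_mono) (auto intro: order_trans[OF _ mult_right_mono[of C "max C 0"]])
    also have "\<dots> \<le> norm w * (max C 0 * (c * sqrt ?M))"
      using l2norm_le_ess_bound[OF assms(1,2) u c] by (intro mult_left_mono) auto
    also have "\<dots> = K * c" unfolding K_def by simp
    finally show ?thesis .
  qed
  have linear: "adjG Lam G w (\<lambda>x. a * u x + c * v x) = a * adjG Lam G w u + c * adjG Lam G w v"
    if "u \<in> Linf Lam" "v \<in> Linf Lam" for u v a c
    using that Linf_lin_comb[OF that, of a c] Linf_imp_L2[OF assms(1,2)] G_lin
    by (simp add: adjG_def inner_add_right)
  have "K \<ge> 0" unfolding K_def by simp
  then show ?thesis unfolding Linf_dual_def using bound linear by (auto simp: adjG_def)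
qed

lemma polar_cone_cone_hull: "polar_cone (cone hull S) = polar_cone S"
proof
  show "polar_cone (cone hull S) \<subseteq> polar_cone S"
    unfolding polar_cone_def by (auto intro: hull_inc)
  show "polar_cone S \<subseteq> polar_cone (cone hull S)"
    unfolding polar_cone_def cone_hull_expl by (auto simp: mult_nonneg_nonpos)
qed

lemma polar_cone_shifted_nonpos_orthant:
  fixes c :: "real^'m"
  assumes c: "\<forall>i. c $ i \<le> 0"
  shows "polar_cone (cone hull ((\<lambda>v. v - c) ` nonpos_orthant))
           = {w. \<forall>i. 0 \<le> w $ i \<and> (c $ i \<noteq> 0 \<longrightarrow> w $ i = 0)}"
proof (unfold polar_cone_cone_hull, intro set_eqI iffI)
  fix w :: "real^'m" assume "w \<in> polar_cone ((\<lambda>v. v - c) ` nonpos_orthant)"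
  then have polar: "w \<bullet> (v - c) \<le> 0" if "v \<in> nonpos_orthant" for v
    using that unfolding polar_cone_def by blast
  show "w \<in> {w. \<forall>i. 0 \<le> w $ i \<and> (c $ i \<noteq> 0 \<longrightarrow> w $ i = 0)}"
  proof (intro CollectI allI conjI impI)
    fix i
    have "c - axis i 1 \<in> nonpos_orthant"
      using c by (auto simp: nonpos_orthant_def axis_def intro: order_trans[of _ 0])
    from polar[OF this] show "0 \<le> w $ i" by (simp add: inner_axis)
    have "c - axis i (c $ i) \<in> nonpos_orthant"
      using c by (auto simp: nonpos_orthant_def axis_def)
    from polar[OF this] have "0 \<le> w $ i * c $ i" by (simp add: inner_axis)
    moreover assume "c $ i \<noteq> 0"
    ultimately show "w $ i = 0"
      using c[rule_format, of i] \<open>0 \<le> w $ i\<close> by (simp add: zero_le_mult_iff)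
  qed
next
  fix w :: "real^'m" assume w: "w \<in> {w. \<forall>i. 0 \<le> w $ i \<and> (c $ i \<noteq> 0 \<longrightarrow> w $ i = 0)}"
  have "w \<bullet> c = 0"
    unfolding inner_vec_def using w by (intro sum.neutral) auto
  moreover have "w \<bullet> v \<le> 0" if "v \<in> nonpos_orthant" for v
    unfolding inner_vec_def using w that
    by (intro sum_nonpos) (auto simp: nonpos_orthant_def mult_nonneg_nonpos)
  ultimately show "w \<in> polar_cone ((\<lambda>v. v - c) ` nonpos_orthant)"
    unfolding polar_cone_def by (auto simp: inner_diff_right)
qed

lemma convex_cone_hull_sum:
  assumes "\<And>i. i \<in> A \<Longrightarrow> f i \<in> convex_cone hull S"
  shows "sum f A \<in> convex_cone hull S"
  using assms by (induction A rule: infinite_finite_induct)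
    (auto intro: convex_cone_hull_add convex_cone_hull_contains_0)

lemma convex_cone_hull_axes:
  "convex_cone hull ((\<lambda>i. axis i 1) ` I) = {w :: real^'n. \<forall>i. 0 \<le> w $ i \<and> (i \<notin> I \<longrightarrow> w $ i = 0)}"
  (is "_ = ?P")
proof
  show "convex_cone hull ((\<lambda>i. axis i 1) ` I) \<subseteq> ?P"
  proof (rule hull_minimal)
    show "(\<lambda>i. axis i 1) ` I \<subseteq> ?P" by (auto simp: axis_def)
    have "?P \<noteq> {}" by (auto intro: exI[of _ 0])
    then show "convex_cone ?P"
      unfolding convex_cone_def convex_def conic_def by auto
  qed
  show "?P \<subseteq> convex_cone hull ((\<lambda>i. axis i 1) ` I)"
  proof
    fix w assume w: "w \<in> ?P"
    have "w = (\<Sum>i\<in>UNIV. w $ i *\<^sub>R axis i 1)"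
      by (simp add: basis_expansion flip: scalar_mult_eq_scaleR)
    also have "\<dots> \<in> convex_cone hull ((\<lambda>i. axis i 1) ` I)"
    proof (rule convex_cone_hull_sum)
      fix i
      show "w $ i *\<^sub>R axis i 1 \<in> convex_cone hull ((\<lambda>i. axis i 1) ` I)"
        using w by (cases "i \<in> I") (auto intro: convex_cone_hull_mul hull_inc convex_cone_hull_contains_0)
    qed
    finally show "w \<in> convex_cone hull ((\<lambda>i. axis i 1) ` I)" .
  qed
qed

lemma image_restrict_inner_eq:
  fixes g :: "'a \<Rightarrow> 'b::euclidean_space"
  assumes B: "independent B"
    and p: "\<And>b. b \<in> B \<Longrightarrow> p b \<in> U \<and> g (p b) = b"
    and coef: "\<And>u. u \<in> U \<Longrightarrow> g u = (\<Sum>b\<in>B. coef u b *\<^sub>R b)"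
  shows "(\<lambda>w. restrict (\<lambda>u. w \<bullet> g u) U) ` C =
           {\<phi> \<in> extensional U. (\<Sum>b\<in>B. \<phi> (p b) *\<^sub>R b) \<in> (\<lambda>w. \<Sum>b\<in>B. (w \<bullet> b) *\<^sub>R b) ` C \<and>
              (\<forall>u\<in>U. \<phi> u = (\<Sum>b\<in>B. coef u b * \<phi> (p b)))}"
proof (intro set_eqI iffI)
  fix \<phi> assume "\<phi> \<in> (\<lambda>w. restrict (\<lambda>u. w \<bullet> g u) U) ` C"
  then obtain w where w: "w \<in> C" and \<phi>: "\<phi> = restrict (\<lambda>u. w \<bullet> g u) U" by blast
  have coords: "\<phi> (p b) = w \<bullet> b" if "b \<in> B" for b
    using p[OF that] \<phi> by simp
  have "(\<Sum>b\<in>B. \<phi> (p b) *\<^sub>R b) = (\<Sum>b\<in>B. (w \<bullet> b) *\<^sub>R b)"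
    using coords by simp
  moreover have "\<phi> u = (\<Sum>b\<in>B. coef u b * \<phi> (p b))" if u: "u \<in> U" for u
  proof -
    have "\<phi> u = (\<Sum>b\<in>B. coef u b * (w \<bullet> b))"
      using u by (simp add: \<phi> coef inner_sum_right)
    also have "\<dots> = (\<Sum>b\<in>B. coef u b * \<phi> (p b))"
      using coords by simp
    finally show ?thesis .
  qed
  ultimately show "\<phi> \<in> {\<phi> \<in> extensional U. (\<Sum>b\<in>B. \<phi> (p b) *\<^sub>R b) \<in> (\<lambda>w. \<Sum>b\<in>B. (w \<bullet> b) *\<^sub>R b) ` C \<and>
              (\<forall>u\<in>U. \<phi> u = (\<Sum>b\<in>B. coef u b * \<phi> (p b)))}"
    using w \<phi> by auto
next
  fix \<phi> assume \<phi>: "\<phi> \<in> {\<phi> \<in> extensional U. (\<Sum>b\<in>B. \<phi> (p b) *\<^sub>R b) \<in> (\<lambda>w. \<Sum>b\<in>B. (w \<bullet> b) *\<^sub>R b) ` C \<and>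
              (\<forall>u\<in>U. \<phi> u = (\<Sum>b\<in>B. coef u b * \<phi> (p b)))}"
  then obtain w where w: "w \<in> C"
    and readout: "(\<Sum>b\<in>B. \<phi> (p b) *\<^sub>R b) = (\<Sum>b\<in>B. (w \<bullet> b) *\<^sub>R b)" by auto
  have coords: "\<phi> (p b) = w \<bullet> b" if "b \<in> B" for b
  proof -
    have "(\<Sum>b\<in>B. (\<phi> (p b) - w \<bullet> b) *\<^sub>R b) = 0"
      using readout by (simp add: scaleR_diff_left sum_subtractf)
    then show ?thesis using B that unfolding independent_explicit by auto
  qed
  have "\<phi> = restrict (\<lambda>u. w \<bullet> g u) U"
  proof
    fix u
    show "\<phi> u = restrict (\<lambda>u. w \<bullet> g u) U u"
    proof (cases "u \<in> U")
      case True
      then have "\<phi> u = (\<Sum>b\<in>B. coef u b * \<phi> (p b))" using \<phi> by blast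
      also have "\<dots> = w \<bullet> g u" using coords by (simp add: coef[OF True] inner_sum_right)
      finally show ?thesis using True by simp
    next
      case False
      then show ?thesis using \<phi> by (auto simp: extensional_def)
    qed
  qed
  with w show "\<phi> \<in> (\<lambda>w. restrict (\<lambda>u. w \<bullet> g u) U) ` C" by blast
qed

lemma basis_of_image_with_preimages:
  fixes g :: "'a \<Rightarrow> 'b::euclidean_space"
  obtains B p coef where "independent B" "\<And>b. b \<in> B \<Longrightarrow> p b \<in> U \<and> g (p b) = b"
    "\<And>u. u \<in> U \<Longrightarrow> g u = (\<Sum>b\<in>B. coef u b *\<^sub>R b)"
proof -
  obtain B where B: "B \<subseteq> g ` U" "independent B" "g ` U \<subseteq> span B"
    by (rule maximal_independent_subset)
  have "finite B" using B(2) by (rule finiteI_independent)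
  have "\<forall>u\<in>U. \<exists>a. g u = (\<Sum>b\<in>B. a b *\<^sub>R b)"
    using B(3) by (auto simp: span_finite[OF \<open>finite B\<close>])
  then obtain coef where "\<And>u. u \<in> U \<Longrightarrow> g u = (\<Sum>b\<in>B. coef u b *\<^sub>R b)"
    by metis
  moreover have "inv_into U g b \<in> U \<and> g (inv_into U g b) = b" if "b \<in> B" for b
    using that B(1) by (auto simp: inv_into_into f_inv_into_f)
  ultimately show ?thesis using B(2) that by blast
qed

lemma closedin_image_restrict_inner_convex_cone_hull:
  fixes g :: "'a \<Rightarrow> 'b::euclidean_space"
  assumes "finite E"
  shows "closedin (product_topology (\<lambda>_. euclideanreal) U)
           ((\<lambda>w. restrict (\<lambda>u. w \<bullet> g u) U) ` (convex_cone hull E))"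
proof -
  let ?X = "product_topology (\<lambda>_. euclideanreal) U"
  obtain B p coef where B: "independent B"
    and p: "\<And>b. b \<in> B \<Longrightarrow> p b \<in> U \<and> g (p b) = b"
    and coef: "\<And>u. u \<in> U \<Longrightarrow> g u = (\<Sum>b\<in>B. coef u b *\<^sub>R b)"
    using basis_of_image_with_preimages[of U g] by blast
  have "finite B" using B by (rule finiteI_independent)
  define M where "M w = (\<Sum>b\<in>B. (w \<bullet> b) *\<^sub>R b)" for w
  have "linear M"
    by (rule linearI) (simp_all add: M_def inner_add_left scaleR_add_left sum.distrib scaleR_sum_right)
  then have "M ` (convex_cone hull E) = convex_cone hull (M ` E)"
    by (rule convex_cone_hull_linear_image[symmetric])
  then have "closed (M ` (convex_cone hull E))"
    using assms by (simp add: closed_convex_cone_hull)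
  have eval: "continuous_map ?X euclideanreal (\<lambda>\<phi>. \<phi> u)" if "u \<in> U" for u
    using continuous_map_product_projection[OF that, of "\<lambda>_. euclideanreal"] .
  have "continuous_map ?X euclidean (\<lambda>\<phi>. \<phi> (p b) *\<^sub>R b)" if "b \<in> B" for b
    using eval p[OF that] unfolding continuous_map_atin by (auto intro: tendsto_scaleR)
  then have "closedin ?X {\<phi> \<in> topspace ?X. (\<Sum>b\<in>B. \<phi> (p b) *\<^sub>R b) \<in> M ` (convex_cone hull E)}"
    using \<open>finite B\<close> \<open>closed (M ` (convex_cone hull E))\<close>
    by (intro closedin_continuous_map_preimage[where Y = euclidean] continuous_map_sum) auto
  moreover have "closedin ?X {\<phi> \<in> topspace ?X. \<phi> u = (\<Sum>b\<in>B. coef u b * \<phi> (p b))}"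
    if "u \<in> U" for u
  proof (rule closedin_continuous_maps_eq[OF Hausdorff_space_euclidean])
    show "continuous_map ?X euclideanreal (\<lambda>\<phi>. \<phi> u)" using eval[OF that] .
    show "continuous_map ?X euclideanreal (\<lambda>\<phi>. \<Sum>b\<in>B. coef u b * \<phi> (p b))"
      using p eval \<open>finite B\<close> by (intro continuous_map_sum continuous_map_real_mult_left) auto
  qed
  ultimately have "closedin ?X (\<Inter> (insert {\<phi> \<in> topspace ?X. (\<Sum>b\<in>B. \<phi> (p b) *\<^sub>R b) \<in> M ` (convex_cone hull E)}
      ((\<lambda>u. {\<phi> \<in> topspace ?X. \<phi> u = (\<Sum>b\<in>B. coef u b * \<phi> (p b))}) ` U)))"
    by (intro closedin_Inter) auto
  also have "\<dots> = {\<phi> \<in> extensional U. (\<Sum>b\<in>B. \<phi> (p b) *\<^sub>R b) \<in> M ` (convex_cone hull E) \<and>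
                  (\<forall>u\<in>U. \<phi> u = (\<Sum>b\<in>B. coef u b * \<phi> (p b)))}"
    by (auto simp: PiE_def)
  also have "\<dots> = (\<lambda>w. restrict (\<lambda>u. w \<bullet> g u) U) ` (convex_cone hull E)"
    unfolding M_def by (rule image_restrict_inner_eq[OF B p coef, symmetric])
  finally show ?thesis .
qed

theorem lemmaA1:
  fixes Lam :: "(real^'d) set"
    and f :: "(real^'d \<Rightarrow> real) \<Rightarrow> real"
    and G :: "(real^'d \<Rightarrow> real) \<Rightarrow> real^'m"
    and b :: "real^'m"
    and ua ub uhat ubar :: "real^'d \<Rightarrow> real"
    and delta rho :: real
  assumes Lam_meas: "Lam \<in> sets lebesgue" and Lam_bdd: "bounded Lam"
    and f_ae: "\<forall>u\<in>L2 Lam. \<forall>v\<in>L2 Lam. (AE x in lebesgue_on Lam. u x = v x) \<longrightarrow> f u = f v"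
    and f_C1: "C1_L2 Lam f"
    and G_lin: "\<forall>u\<in>L2 Lam. \<forall>v\<in>L2 Lam. \<forall>a c. G (\<lambda>x. a * u x + c * v x) = a *\<^sub>R G u + c *\<^sub>R G v"
    and G_bdd: "\<exists>C. \<forall>u\<in>L2 Lam. norm (G u) \<le> C * l2norm Lam u"
    and ua: "ua \<in> Linf Lam" and ub: "ub \<in> Linf Lam"
    and delta: "delta > 0" "AE x in lebesgue_on Lam. ua x + delta \<le> ub x"
    and uhat: "uhat \<in> Linf Lam" "\<forall>i. G uhat $ i \<le> b $ i" "rho > 0"
      "AE x in lebesgue_on Lam. ua x + rho \<le> uhat x \<and> uhat x \<le> ub x - rho"
    and ubar: "ubar \<in> Linf Lam" "feasible Lam G b ua ub ubar"
    and ubar_locopt: "\<exists>r>0. \<forall>u. feasible Lam G b ua ub u \<and> l2norm Lam (\<lambda>x. u x - ubar x) < r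
                          \<longrightarrow> f ubar \<le> f u"
  shows "closedin (weak_star Lam)
           (adjG Lam G ` polar_cone (cone hull ((\<lambda>v. v - (G ubar - b)) ` nonpos_orthant)))"
proof -
  let ?S = "adjG Lam G ` polar_cone (cone hull ((\<lambda>v. v - (G ubar - b)) ` nonpos_orthant))"
  \<comment> \<open>only the feasibility \<open>G ubar \<le> b\<close> enters; the cone is then finitely generated\<close>
  have "\<forall>i. (G ubar - b) $ i \<le> 0" using ubar(2) by (simp add: feasible_def)
  then have polar: "polar_cone (cone hull ((\<lambda>v. v - (G ubar - b)) ` nonpos_orthant))
      = convex_cone hull ((\<lambda>i. axis i 1) ` {i. (G ubar - b) $ i = 0})"
    by (simp add: polar_cone_shifted_nonpos_orthant convex_cone_hull_axes)
  have "closedin (product_topology (\<lambda>_. euclideanreal) (Linf Lam)) ?S"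
    unfolding polar adjG_def[abs_def] by (rule closedin_image_restrict_inner_convex_cone_hull) simp
  moreover have "?S \<subseteq> Linf_dual Lam"
    using adjG_in_Linf_dual[OF Lam_meas Lam_bdd G_lin G_bdd] by blast
  ultimately show ?thesis
    unfolding weak_star_def closedin_subtopology by (metis inf.absorb1)
qed

end
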